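(* Let $(\mathbf X_k)_{k\in\mathbb Z_+}$ be a 2-type doubly symmetric Galton--Watson process with immigration (see context) with offspring means $(\alpha,\beta)\in[0,1]^2$ such that $\alpha+\beta=1$, with $\mathbf X_0=\mathbf 0$, and suppose $\mathbb E\|\boldsymbol\xi_{1,1,1}\|^\ell,\mathbb E\|\boldsymbol\xi_{1,1,2}\|^\ell,\mathbb E\|\boldsymbol\varepsilon_1\|^\ell<\infty$ for some $\ell\in\mathbb N$. Then $\sup_{k\in\mathbb N}k^{-\ell}\,\mathbb E\|\mathbf X_k\|^\ell<\infty$.
   Context: Process: $\mathbf X_k=(X_{k,1},X_{k,2})^\top$, $\mathbf X_0=\mathbf 0$, and for $k\in\mathbb N$, $\mathbf X_k=\sum_{j=1}^{X_{k-1,1}}\boldsymbol\xi_{k,j,1}+\sum_{j=1}^{X_{k-1,2}}\boldsymbol\xi_{k,j,2}+\boldsymbol\varepsilon_k$, where $\{\boldsymbol\xi_{k,j,i},\boldsymbol\varepsilon_k:k,j\in\mathbb N,i\in\{1,2\}\}$ are independent $\mathbb Z_+^2$-valued random vectors and each of the families $\{\boldsymbol\xi_{k,j,1}\}$, $\{\boldsymbol\xi_{k,j,2}\}$, $\{\boldsymbol\varepsilon_k\}$ is identically distributed. Doubly symmetric with offspring means $(\alpha,\beta)$: $\mathbb E\boldsymbol\xi_{1,1,1}=(\alpha,\beta)^\top$, $\mathbb E\boldsymbol\xi_{1,1,2}=(\beta,\alpha)^\top$. *)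

theory Defs
  imports "HOL-Probability.Probability"
begin

text \<open>Offspring vectors xi k j i (generation k,
 individual j, type i in {1,2}) and immigration eps k.\<close>

fun gwi :: "(nat \<Rightarrow> nat \<Rightarrow> nat \<Rightarrow> 'a \<Rightarrow> nat \<times> nat) \<Rightarrow> (nat \<Rightarrow> 'a \<Rightarrow> nat \<times> nat)
            \<Rightarrow> nat \<Rightarrow> 'a \<Rightarrow> nat \<times> nat" where
  "gwi xi eps 0 \<omega> = (0, 0)"
| "gwi xi eps (Suc k) \<omega> =
     ((\<Sum>j\<in>{1..fst (gwi xi eps k \<omega>)}. fst (xi (Suc k) j 1 \<omega>))
        + (\<Sum>j\<in>{1..snd (gwi xi eps k \<omega>)}. fst (xi (Suc k) j 2 \<omega>))
        + fst (eps (Suc k) \<omega>),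
      (\<Sum>j\<in>{1..fst (gwi xi eps k \<omega>)}. snd (xi (Suc k) j 1 \<omega>))
        + (\<Sum>j\<in>{1..snd (gwi xi eps k \<omega>)}. snd (xi (Suc k) j 2 \<omega>))
        + snd (eps (Suc k) \<omega>))"

definition znorm :: "nat \<times> nat \<Rightarrow> real" where
  "znorm v = norm (real (fst v), real (snd v))"

definition gwi_index :: "((nat \<times> nat \<times> nat) + nat) set" where
  "gwi_index = Inl ` {(k, j, i). 1 \<le> k \<and> 1 \<le> j \<and> i \<in> {1, 2}} \<union> Inr ` {1..}"

definition gwi_family :: "(nat \<Rightarrow> nat \<Rightarrow> nat \<Rightarrow> 'a \<Rightarrow> nat \<times> nat) \<Rightarrow> (nat \<Rightarrow> 'a \<Rightarrow> nat \<times> nat)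
   \<Rightarrow> ((nat \<times> nat \<times> nat) + nat) \<Rightarrow> 'a \<Rightarrow> nat \<times> nat" where
  "gwi_family xi eps idx = (case idx of Inl (k, j, i) \<Rightarrow> xi k j i | Inr k \<Rightarrow> eps k)"

end

theory Submission
  imports Defs
begin

text \<open>
  Let \<open>Y k = X k 1 + X k 2\<close> be the total population. Every offspring vector has total mean
  \<open>\<alpha> + \<beta> = 1\<close>, so \<open>Y\<close> behaves like a critical single-type branching process with immigration.
  Given generation \<open>k\<close>, the variable \<open>Y (k + 1)\<close> is a sum of \<open>Y k + 1\<close> independent variables of
  mean \<open>1\<close> (one of mean \<open>\<mu>\<close>, the immigration) with bounded moments up to order \<open>l\<close>. Adding the
  summands one at a time and expanding binomially gives
  \<open>E (1 + Y (k + 1))^p \<le> E (1 + Y k)^p + K p * E (1 + Y k)^(p - 1)\<close>, and induction on \<open>p\<close> then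
  on \<open>k\<close> yields \<open>E (1 + Y k)^p = O(k^p)\<close> for \<open>p \<le> l\<close>. Finally \<open>\<parallel>X k\<parallel> \<le> Y k\<close>.
\<close>

section \<open>Binomial moment constants\<close>

lemma power_add_ge_two_terms:
  fixes m x :: real
  assumes "0 \<le> m" "0 \<le> x"
  shows "m ^ Suc n + real (Suc n) * m ^ n * x \<le> (m + x) ^ Suc n"
proof (induction n)
  case (Suc n)
  have "m ^ Suc (Suc n) + real (Suc (Suc n)) * m ^ Suc n * x
      \<le> (m + x) * (m ^ Suc n + real (Suc n) * m ^ n * x)"
    using assms by (simp add: algebra_simps)
  also have "\<dots> \<le> (m + x) * (m + x) ^ Suc n"
    using Suc assms by (intro mult_left_mono) auto
  finally show ?case by simp
qed simp

lemma sum_choose_from_two_le: "(\<Sum>j\<le>r. real (Suc (Suc r) choose (j + 2))) \<le> 2 ^ Suc (Suc r)"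
proof -
  have "(\<Sum>k\<le>Suc (Suc r). real (Suc (Suc r) choose k))
     = real (Suc (Suc r) choose 0) + real (Suc (Suc r) choose 1) + (\<Sum>j\<le>r. real (Suc (Suc r) choose (j + 2)))"
    by (simp only: sum.atMost_Suc_shift) (simp del: binomial_Suc_Suc)
  moreover have "(\<Sum>k\<le>Suc (Suc r). real (Suc (Suc r) choose k)) = 2 ^ Suc (Suc r)"
    using choose_row_sum[of "Suc (Suc r)"] by (metis of_nat_numeral of_nat_power of_nat_sum)
  ultimately show ?thesis by simp
qed

text \<open>The constant \<open>D p\<close> in \<open>E (c + \<Sum>i. V i)^p \<le> (c + \<Sum>i. E (V i))^p + D p * N^(p - 1)\<close>
  for independent \<open>V i \<ge> 0\<close> whose means and moments of order \<open>2..p\<close> are at most \<open>B\<close>,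
  where \<open>N = 1 + c + #summands\<close>; the recursion is what adding one summand costs.\<close>
fun moment_excess :: "real \<Rightarrow> nat \<Rightarrow> real" where
  "moment_excess B 0 = 0"
| "moment_excess B (Suc r) = 4 ^ Suc r * B ^ (r + 2) * (1 + (\<Sum>q\<le>r. moment_excess B q))"

lemma moment_excess_nonneg: "0 \<le> B \<Longrightarrow> 0 \<le> moment_excess B p"
proof (induction p rule: less_induct)
  case (less p)
  then show ?case
    by (cases p) (auto intro!: sum_nonneg mult_nonneg_nonneg add_nonneg_nonneg)
qed

lemma moment_excess_le_sum:
  "0 \<le> B \<Longrightarrow> q \<le> r \<Longrightarrow> moment_excess B q \<le> (\<Sum>q\<le>r. moment_excess B q)"
  by (rule member_le_sum) (auto intro: moment_excess_nonneg)

lemma moment_excess_dominates: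
  fixes B :: real and r :: nat
  defines "S \<equiv> \<Sum>q\<le>Suc r. moment_excess B q"
  assumes B: "1 \<le> B"
  shows "2 ^ Suc (Suc r) * S * B + 2 ^ Suc (Suc r) * ((B ^ Suc (Suc r) + S) * B)
           \<le> moment_excess B (Suc (Suc r))"
proof -
  let ?p = "Suc (Suc r)"
  have S0: "0 \<le> S" unfolding S_def using B by (intro sum_nonneg moment_excess_nonneg) auto
  have B3: "B \<le> B ^ Suc ?p" using power_increasing[of 1 "Suc ?p" B] B by simp
  have "(2::real) * 2 ^ ?p \<le> 2 ^ (2 * ?p)"
    by (subst power_Suc[symmetric], rule power_increasing) auto
  then have "(2::real) * 2 ^ ?p \<le> 4 ^ ?p" by (simp add: power_mult)
  have "2 ^ ?p * S * B + 2 ^ ?p * ((B ^ ?p + S) * B) = 2 ^ ?p * (B ^ Suc ?p + 2 * S * B)"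
    by (simp add: algebra_simps)
  also have "\<dots> \<le> 2 ^ ?p * (B ^ Suc ?p * 2 * (1 + S))"
  proof (rule mult_left_mono)
    have "2 * S * B \<le> 2 * S * B ^ Suc ?p" using S0 B3 by (intro mult_left_mono) auto
    moreover have "0 \<le> B ^ Suc ?p" using B by simp
    ultimately show "B ^ Suc ?p + 2 * S * B \<le> B ^ Suc ?p * 2 * (1 + S)"
      by (simp add: algebra_simps)
  qed simp
  also have "\<dots> = (2 * 2 ^ ?p) * B ^ Suc ?p * (1 + S)" by (simp add: algebra_simps)
  also have "\<dots> \<le> 4 ^ ?p * B ^ Suc ?p * (1 + S)"
    using \<open>2 * 2 ^ ?p \<le> 4 ^ ?p\<close> B S0 by (intro mult_right_mono) auto
  finally show ?thesis by (simp add: S_def)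
qed

lemma binomial_tail_le:
  fixes B m N :: real
  assumes B: "1 \<le> B" and m: "0 \<le> m" "m \<le> B * N" and N: "1 \<le> N"
  shows "(\<Sum>j\<le>r. real (Suc (Suc r) choose (j + 2))
            * (m ^ (r - j) + moment_excess B (r - j) * N ^ (r - j - 1)) * B)
         \<le> 2 ^ Suc (Suc r) * ((B ^ Suc (Suc r) + (\<Sum>q\<le>Suc r. moment_excess B q)) * B * N ^ r)"
proof -
  let ?p = "Suc (Suc r)"
  define S where "S = (\<Sum>q\<le>Suc r. moment_excess B q)"
  have S0: "0 \<le> S" unfolding S_def using B by (intro sum_nonneg moment_excess_nonneg) auto
  have term_le: "(m ^ (r - j) + moment_excess B (r - j) * N ^ (r - j - 1)) * B
                   \<le> (B ^ ?p + S) * B * N ^ r" if "j \<le> r" for j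
  proof -
    have "m ^ (r - j) \<le> (B * N) ^ (r - j)" using m by (intro power_mono) auto
    also have "\<dots> = B ^ (r - j) * N ^ (r - j)" by (simp add: power_mult_distrib)
    also have "\<dots> \<le> B ^ ?p * N ^ r"
      using B N by (intro mult_mono power_increasing) auto
    finally have "m ^ (r - j) \<le> B ^ ?p * N ^ r" .
    moreover have "moment_excess B (r - j) \<le> S"
      unfolding S_def using B by (intro moment_excess_le_sum) auto
    then have "moment_excess B (r - j) * N ^ (r - j - 1) \<le> S * N ^ r"
      using B N S0 by (intro mult_mono power_increasing) (auto intro: moment_excess_nonneg)
    ultimately have "m ^ (r - j) + moment_excess B (r - j) * N ^ (r - j - 1) \<le> (B ^ ?p + S) * N ^ r"
      by (simp add: algebra_simps)
    from mult_right_mono[OF this, of B] B show ?thesis by (simp add: algebra_simps)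
  qed
  have "(\<Sum>j\<le>r. real (?p choose (j + 2)) * (m ^ (r - j) + moment_excess B (r - j) * N ^ (r - j - 1)) * B)
      \<le> (\<Sum>j\<le>r. real (?p choose (j + 2)) * ((B ^ ?p + S) * B * N ^ r))"
    using mult_left_mono[OF term_le, of _ "real (?p choose (_ + 2))"]
    by (intro sum_mono) (simp add: mult.assoc)
  also have "\<dots> = (\<Sum>j\<le>r. real (?p choose (j + 2))) * ((B ^ ?p + S) * B * N ^ r)"
    by (simp add: sum_distrib_right)
  also have "\<dots> \<le> 2 ^ ?p * ((B ^ ?p + S) * B * N ^ r)"
    using sum_choose_from_two_le[of r] B N S0 by (intro mult_right_mono) auto
  finally show ?thesis unfolding S_def .
qed

lemma moment_excess_step:
  fixes B m mi N :: real
  assumes B: "1 \<le> B" and m: "0 \<le> m" "m \<le> B * N" and mi: "0 \<le> mi" "mi \<le> B" and N: "1 \<le> N"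
  shows "(\<Sum>j\<le>p. real (p choose j) * (m ^ (p - j) + moment_excess B (p - j) * N ^ (p - j - 1))
            * (if j = 0 then 1 else if j = 1 then mi else B))
         \<le> (m + mi) ^ p + moment_excess B p * (N + 1) ^ (p - 1)"
proof (cases "p < 2")
  case True
  then consider "p = 0" | "p = 1" by linarith
  then show ?thesis by cases simp_all
next
  case False
  then obtain r where p: "p = Suc (Suc r)" by (metis add_2_eq_Suc le_Suc_ex not_less)
  define S where "S = (\<Sum>q\<le>Suc r. moment_excess B q)"
  define D where "D = moment_excess B p"
  have S0: "0 \<le> S" unfolding S_def using B by (intro sum_nonneg moment_excess_nonneg) auto
  have D0: "0 \<le> D" unfolding D_def using B by (intro moment_excess_nonneg) auto
  define f where "f j = real (p choose j) * (m ^ (p - j) + moment_excess B (p - j) * N ^ (p - j - 1))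
            * (if j = 0 then 1 else if j = 1 then mi else B)" for j
  have "(\<Sum>j\<le>p. f j) = f 0 + f 1 + (\<Sum>j\<le>r. f (j + 2))"
    unfolding p by (simp only: sum.atMost_Suc_shift) (simp del: binomial_Suc_Suc)
  moreover have "f 0 = m ^ p + D * N ^ Suc r" unfolding f_def D_def p by simp
  moreover have "f 1 = real p * m ^ Suc r * mi + real p * moment_excess B (Suc r) * N ^ r * mi"
    unfolding f_def p by (simp add: algebra_simps)
  moreover have "(\<Sum>j\<le>r. f (j + 2)) \<le> 2 ^ p * ((B ^ p + S) * B * N ^ r)"
    using binomial_tail_le[OF B m N, of r] unfolding f_def p S_def by simp
  moreover have "real p * moment_excess B (Suc r) * N ^ r * mi \<le> 2 ^ p * S * B * N ^ r"
  proof -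
    define E where "E = moment_excess B (Suc r)"
    have "0 \<le> E" unfolding E_def using B by (intro moment_excess_nonneg) simp
    moreover have "E \<le> S" unfolding E_def S_def using B by (intro moment_excess_le_sum) simp_all
    moreover have "real p \<le> 2 ^ p" by (metis less_exp less_imp_le of_nat_le_iff of_nat_numeral of_nat_power)
    ultimately have "real p * E \<le> 2 ^ p * S" by (intro mult_mono) auto
    moreover have "mi * N ^ r \<le> B * N ^ r" using mi N by (intro mult_right_mono) auto
    ultimately have "(real p * E) * (mi * N ^ r) \<le> (2 ^ p * S) * (B * N ^ r)"
      by (rule mult_mono) (use mi N S0 in auto)
    then show ?thesis unfolding E_def by (simp add: algebra_simps)
  qed
  ultimately have "(\<Sum>j\<le>p. f j) \<le> (m ^ p + real p * m ^ Suc r * mi) + D * N ^ Suc r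
                      + (2 ^ p * S * B + 2 ^ p * ((B ^ p + S) * B)) * N ^ r"
    by (simp add: algebra_simps)
  also have "\<dots> \<le> (m + mi) ^ p + D * N ^ Suc r + D * N ^ r"
    using power_add_ge_two_terms[OF m(1) mi(1), of "Suc r"] moment_excess_dominates[OF B, of r] N
    unfolding p S_def D_def by (intro add_mono mult_right_mono) auto
  also have "\<dots> = (m + mi) ^ p + D * ((N + 1) * N ^ r)" by (simp add: algebra_simps)
  also have "\<dots> \<le> (m + mi) ^ p + D * (N + 1) ^ (p - 1)"
    using N D0 unfolding p by (intro add_left_mono mult_left_mono) (auto intro: power_mono)
  finally show ?thesis unfolding f_def D_def .
qed

lemma power_add_le_power_plus:
  fixes x \<mu> :: real
  assumes x: "1 \<le> x" and \<mu>: "0 \<le> \<mu>"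
  shows "(x + \<mu>) ^ p \<le> x ^ p + (2 + \<mu>) ^ p * x ^ (p - 1)"
proof (induction p)
  case (Suc q)
  show ?case
  proof (cases q)
    case (Suc r)
    define A where "A = (2 + \<mu>) ^ q"
    have "2 + \<mu> \<le> A"
      unfolding A_def using \<mu> Suc power_increasing[of 1 q "2 + \<mu>"] by simp
    then have A: "\<mu> \<le> A" "0 \<le> A" using \<mu> by auto
    have "(x + \<mu>) ^ Suc q = (x + \<mu>) * (x + \<mu>) ^ q" by simp
    also have "\<dots> \<le> (x + \<mu>) * (x ^ q + A * x ^ r)"
      using Suc.IH x \<mu> unfolding A_def Suc by (intro mult_left_mono) auto
    also have "\<dots> = x ^ Suc q + \<mu> * x ^ q + A * x ^ q + A * \<mu> * x ^ r"
      unfolding Suc by (simp add: algebra_simps)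
    also have "\<dots> \<le> x ^ Suc q + \<mu> * x ^ q + A * x ^ q + A * \<mu> * x ^ q"
      using x A \<mu> Suc by (intro add_left_mono mult_left_mono power_increasing) auto
    also have "\<dots> = x ^ Suc q + (\<mu> + A * (1 + \<mu>)) * x ^ q" by (simp add: algebra_simps)
    also have "\<dots> \<le> x ^ Suc q + (2 + \<mu>) ^ Suc q * x ^ q"
      using A x unfolding A_def by (intro add_left_mono mult_right_mono) (auto simp: algebra_simps)
    finally show ?thesis by simp
  qed simp
qed simp

section \<open>Independent families of discrete random variables\<close>

lemma measurable_count_space_apply2:
  fixes f :: "'a \<Rightarrow> 'b::countable" and g :: "'a \<Rightarrow> 'c::countable"
  assumes f: "f \<in> measurable N (count_space UNIV)" and g: "g \<in> measurable N (count_space UNIV)"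
  shows "(\<lambda>x. F (f x) (g x)) \<in> measurable N (count_space UNIV)"
proof -
  have "(\<lambda>x. F y (g x)) \<in> measurable N (count_space UNIV)" for y
    by (rule measurable_compose[OF g]) simp
  then show ?thesis by (rule measurable_compose_countable[OF _ f])
qed

lemma measurable_count_space_sum:
  fixes f :: "'i \<Rightarrow> 'a \<Rightarrow> 'b::{countable, comm_monoid_add}"
  assumes "\<And>i. i \<in> S \<Longrightarrow> f i \<in> measurable N (count_space UNIV)"
  shows "(\<lambda>x. \<Sum>i\<in>S. f i x) \<in> measurable N (count_space UNIV)"
  using assms
  by (induction S rule: infinite_finite_induct) (auto intro!: measurable_count_space_apply2)

lemma nn_integral_split_countable:
  fixes Y :: "'a \<Rightarrow> 'c::countable" and G :: "'c \<Rightarrow> 'a \<Rightarrow> ennreal"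
  assumes Y: "Y \<in> measurable M (count_space UNIV)" and G: "\<And>y. G y \<in> borel_measurable M"
  shows "(\<integral>\<^sup>+\<omega>. G (Y \<omega>) \<omega> \<partial>M) = (\<Sum>t. \<integral>\<^sup>+\<omega>. indicator {t} (to_nat (Y \<omega>)) * G (from_nat t) \<omega> \<partial>M)"
proof -
  have "G (Y \<omega>) \<omega> = (\<Sum>t. indicator {t} (to_nat (Y \<omega>)) * G (from_nat t) \<omega>)" for \<omega>
    by (subst suminf_finite[where N = "{to_nat (Y \<omega>)}"]) auto
  moreover have "(\<lambda>\<omega>. indicator {t} (to_nat (Y \<omega>)) * G (from_nat t) \<omega>) \<in> borel_measurable M" for t
    by (intro borel_measurable_times_ennreal measurable_compose[OF Y] G) auto
  ultimately show ?thesis by (simp add: nn_integral_suminf)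
qed

context prob_space begin

lemma nn_integral_cong_distr:
  fixes f g :: "'a \<Rightarrow> 'b" and h :: "'b \<Rightarrow> ennreal"
  assumes "distr M (count_space UNIV) f = distr M (count_space UNIV) g"
    and "f \<in> measurable M (count_space UNIV)" "g \<in> measurable M (count_space UNIV)"
  shows "(\<integral>\<^sup>+\<omega>. h (f \<omega>) \<partial>M) = (\<integral>\<^sup>+\<omega>. h (g \<omega>) \<partial>M)"
  using assms nn_integral_distr[of f M "count_space UNIV" h] nn_integral_distr[of g M "count_space UNIV" h]
  by simp

lemma nn_integral_power_le_one_plus:
  fixes Y :: "'a \<Rightarrow> real"
  assumes Y: "Y \<in> borel_measurable M" and Y0: "\<And>\<omega>. 0 \<le> Y \<omega>" and q: "q \<le> l"
  shows "(\<integral>\<^sup>+\<omega>. Y \<omega> ^ q \<partial>M) \<le> 1 + (\<integral>\<^sup>+\<omega>. Y \<omega> ^ l \<partial>M)"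
proof -
  have "ennreal (Y \<omega> ^ q) \<le> 1 + ennreal (Y \<omega> ^ l)" for \<omega>
  proof -
    have "Y \<omega> ^ q \<le> 1 + Y \<omega> ^ l"
    proof (cases "Y \<omega> \<le> 1")
      case True then show ?thesis using Y0[of \<omega>] by (simp add: power_le_one add_increasing2)
    next
      case False then show ?thesis using q by (simp add: power_increasing add_increasing)
    qed
    then have "ennreal (Y \<omega> ^ q) \<le> ennreal (1 + Y \<omega> ^ l)" by (rule ennreal_leI)
    then show ?thesis using Y0[of \<omega>] by (simp add: ennreal_plus)
  qed
  then have "(\<integral>\<^sup>+\<omega>. Y \<omega> ^ q \<partial>M) \<le> (\<integral>\<^sup>+\<omega>. 1 + ennreal (Y \<omega> ^ l) \<partial>M)"
    by (intro nn_integral_mono)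
  also have "\<dots> = 1 + (\<integral>\<^sup>+\<omega>. Y \<omega> ^ l \<partial>M)"
    using Y by (subst nn_integral_add) (auto simp: emeasure_space_1)
  finally show ?thesis .
qed

end

locale indep_family = prob_space M for M :: "'a measure" +
  fixes X :: "'i \<Rightarrow> 'a \<Rightarrow> 'b" and I :: "'i set"
  assumes indep: "indep_vars (\<lambda>_. count_space UNIV) X I"
begin

definition var_events :: "'i \<Rightarrow> 'a set set" where
  "var_events i = {X i -` A \<inter> space M | A. A \<in> sets (count_space (UNIV :: 'b set))}"

definition sigma_vars :: "'i set \<Rightarrow> 'a measure" where
  "sigma_vars K = sigma (space M) (\<Union>i\<in>K. var_events i)"

lemma var_events_subset: "var_events i \<subseteq> Pow (space M)"
  unfolding var_events_def by auto

lemma space_sigma_vars [simp]: "space (sigma_vars K) = space M"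
  unfolding sigma_vars_def using var_events_subset by (auto simp: space_measure_of_conv)

lemma sets_sigma_vars: "sets (sigma_vars K) = sigma_sets (space M) (\<Union>i\<in>K. var_events i)"
  unfolding sigma_vars_def using var_events_subset by (intro sets_measure_of) auto

lemma measurable_sigma_vars: "i \<in> K \<Longrightarrow> X i \<in> measurable (sigma_vars K) (count_space UNIV)"
  by (rule measurableI) (auto simp: sets_sigma_vars var_events_def intro!: sigma_sets.Basic)

lemma measurable_var: "i \<in> I \<Longrightarrow> X i \<in> measurable M (count_space UNIV)"
  using indep unfolding indep_vars_def2 by auto

lemma subalgebra_sigma_vars: "K \<subseteq> I \<Longrightarrow> subalgebra M (sigma_vars K)"
  unfolding subalgebra_def
proof safe
  assume K: "K \<subseteq> I"
  show "x \<in> sets M" if "x \<in> sets (sigma_vars K)" for x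
    using that unfolding sets_sigma_vars
  proof (induction rule: sigma_sets.induct)
    case (Basic a)
    then obtain i A where "i \<in> K" "a = X i -` A \<inter> space M" by (auto simp: var_events_def)
    then show ?case using measurable_var[of i] K by (auto simp: measurable_def)
  qed auto
qed simp_all

lemma measurable_from_sigma_vars:
  "K \<subseteq> I \<Longrightarrow> f \<in> measurable (sigma_vars K) N \<Longrightarrow> f \<in> measurable M N"
  using subalgebra_sigma_vars measurable_from_subalg by blast

lemma measurable_sigma_vars_mono:
  assumes "K \<subseteq> K'" "f \<in> measurable (sigma_vars K) N"
  shows "f \<in> measurable (sigma_vars K') N"
proof (rule measurable_from_subalg[OF _ assms(2)])
  show "subalgebra (sigma_vars K') (sigma_vars K)"
    using assms(1) by (auto simp: subalgebra_def sets_sigma_vars intro!: sigma_sets_mono')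
qed

lemma nn_integral_mult_indep:
  fixes g0 g1 :: "'a \<Rightarrow> ennreal"
  assumes K: "K0 \<subseteq> I" "K1 \<subseteq> I" "K0 \<inter> K1 = {}"
    and g: "g0 \<in> borel_measurable (sigma_vars K0)" "g1 \<in> borel_measurable (sigma_vars K1)"
  shows "(\<integral>\<^sup>+\<omega>. g0 \<omega> * g1 \<omega> \<partial>M) = (\<integral>\<^sup>+\<omega>. g0 \<omega> \<partial>M) * (\<integral>\<^sup>+\<omega>. g1 \<omega> \<partial>M)"
proof -
  define J where "J = (\<lambda>b::bool. if b then K1 else K0)"
  define G where "G = (\<lambda>b::bool. if b then g1 else g0)"
  have "indep_sets (\<lambda>b. sigma_sets (space M) (\<Union>i\<in>J b. var_events i)) UNIV"
  proof (rule indep_sets_collect_sigma)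
    show "indep_sets var_events (\<Union>b\<in>UNIV. J b)"
      using indep K unfolding indep_vars_def2 var_events_def
      by (auto simp: J_def intro: indep_sets_mono_index)
    show "Int_stable (var_events i)" for i
    proof (rule Int_stableI)
      fix a b assume "a \<in> var_events i" "b \<in> var_events i"
      then obtain A B where "a = X i -` A \<inter> space M" "b = X i -` B \<inter> space M"
        by (auto simp: var_events_def)
      then show "a \<inter> b \<in> var_events i" by (auto simp: var_events_def intro!: exI[of _ "A \<inter> B"])
    qed
    show "disjoint_family_on J UNIV"
      using K by (auto simp: disjoint_family_on_def J_def)
  qed
  moreover have G: "G b \<in> borel_measurable (sigma_vars (J b))" for b
    using g by (cases b) (auto simp: G_def J_def)
  ultimately have "indep_vars (\<lambda>_. borel) G UNIV"
    unfolding indep_vars_def2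
  proof (intro conjI ballI)
    show "random_variable borel (G b)" for b
      using K by (intro measurable_from_sigma_vars[OF _ G]) (auto simp: J_def)
    show "indep_sets (\<lambda>b. {G b -` A \<inter> space M |A. A \<in> sets borel}) UNIV"
      if "indep_sets (\<lambda>b. sigma_sets (space M) (\<Union>i\<in>J b. var_events i)) UNIV"
      using G by (intro indep_sets_mono_sets[OF that]) (auto simp: measurable_def sets_sigma_vars)
  qed
  then have "(\<integral>\<^sup>+\<omega>. (\<Prod>b\<in>UNIV. G b \<omega>) \<partial>M) = (\<Prod>b\<in>UNIV. \<integral>\<^sup>+\<omega>. G b \<omega> \<partial>M)"
    by (intro indep_vars_nn_integral) auto
  then show ?thesis by (simp add: UNIV_bool G_def mult.commute)
qed

lemma nn_integral_power_add_indep_le: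
  fixes U W :: "'a \<Rightarrow> real"
  assumes K: "K0 \<subseteq> I" "K1 \<subseteq> I" "K0 \<inter> K1 = {}"
    and U: "U \<in> borel_measurable (sigma_vars K0)" and W: "W \<in> borel_measurable (sigma_vars K1)"
    and U0: "\<And>\<omega>. 0 \<le> U \<omega>" and W0: "\<And>\<omega>. 0 \<le> W \<omega>"
    and a: "\<And>q. q \<le> p \<Longrightarrow> (\<integral>\<^sup>+\<omega>. ennreal (U \<omega> ^ q) \<partial>M) \<le> ennreal (a q)"
    and b: "\<And>q. q \<le> p \<Longrightarrow> (\<integral>\<^sup>+\<omega>. ennreal (W \<omega> ^ q) \<partial>M) \<le> ennreal (b q)"
    and a0: "\<And>q. 0 \<le> a q" and b0: "\<And>q. 0 \<le> b q"
  shows "(\<integral>\<^sup>+\<omega>. ennreal ((U \<omega> + W \<omega>) ^ p) \<partial>M)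
           \<le> ennreal (\<Sum>j\<le>p. real (p choose j) * a (p - j) * b j)"
proof -
  have UM: "U \<in> borel_measurable M" using measurable_from_sigma_vars[OF K(1) U] .
  have WM: "W \<in> borel_measurable M" using measurable_from_sigma_vars[OF K(2) W] .
  have "(U \<omega> + W \<omega>) ^ p = (\<Sum>j\<le>p. real (p choose j) * (U \<omega> ^ (p - j) * W \<omega> ^ j))" for \<omega>
    using binomial_ring[of "W \<omega>" "U \<omega>" p] by (simp add: add.commute mult_ac)
  then have "(\<integral>\<^sup>+\<omega>. ennreal ((U \<omega> + W \<omega>) ^ p) \<partial>M)
      = (\<integral>\<^sup>+\<omega>. (\<Sum>j\<le>p. ennreal (real (p choose j)) * (ennreal (U \<omega> ^ (p - j)) * ennreal (W \<omega> ^ j))) \<partial>M)"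
    using U0 W0 by (intro nn_integral_cong) (simp add: ennreal_mult[symmetric] sum_nonneg)
  also have "\<dots> = (\<Sum>j\<le>p. ennreal (real (p choose j))
                     * ((\<integral>\<^sup>+\<omega>. ennreal (U \<omega> ^ (p - j)) \<partial>M) * (\<integral>\<^sup>+\<omega>. ennreal (W \<omega> ^ j) \<partial>M)))"
    using UM WM U W
    by (simp add: nn_integral_sum nn_integral_cmult nn_integral_mult_indep[OF K])
  also have "\<dots> \<le> (\<Sum>j\<le>p. ennreal (real (p choose j)) * (ennreal (a (p - j)) * ennreal (b j)))"
    by (intro sum_mono mult_left_mono mult_mono a b) auto
  also have "\<dots> = ennreal (\<Sum>j\<le>p. real (p choose j) * a (p - j) * b j)"
    using a0 b0 by (simp add: ennreal_mult[symmetric] mult.assoc)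
  finally show ?thesis .
qed

lemma nn_integral_indep_freeze:
  fixes Y :: "'a \<Rightarrow> 'c::countable" and h :: "'c \<Rightarrow> 'a \<Rightarrow> ennreal"
  assumes K: "K0 \<subseteq> I" "K1 \<subseteq> I" "K0 \<inter> K1 = {}"
    and Y: "Y \<in> measurable (sigma_vars K0) (count_space UNIV)"
    and h: "\<And>y. h y \<in> borel_measurable (sigma_vars K1)"
  shows "(\<integral>\<^sup>+\<omega>. h (Y \<omega>) \<omega> \<partial>M) = (\<integral>\<^sup>+\<omega>. (\<integral>\<^sup>+\<omega>'. h (Y \<omega>) \<omega>' \<partial>M) \<partial>M)"
proof -
  have YM: "Y \<in> measurable M (count_space UNIV)" by (rule measurable_from_sigma_vars[OF K(1) Y])
  have hM: "h y \<in> borel_measurable M" for y by (rule measurable_from_sigma_vars[OF K(2) h])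
  have ind: "(\<lambda>\<omega>. indicator {t} (to_nat (Y \<omega>)) :: ennreal) \<in> borel_measurable (sigma_vars K0)" for t
    by (rule measurable_compose[OF Y]) simp
  have "(\<integral>\<^sup>+\<omega>. h (Y \<omega>) \<omega> \<partial>M)
      = (\<Sum>t. \<integral>\<^sup>+\<omega>. indicator {t} (to_nat (Y \<omega>)) * h (from_nat t) \<omega> \<partial>M)"
    by (rule nn_integral_split_countable[OF YM hM])
  also have "\<dots> = (\<Sum>t. \<integral>\<^sup>+\<omega>. indicator {t} (to_nat (Y \<omega>)) * (\<integral>\<^sup>+\<omega>'. h (from_nat t) \<omega>' \<partial>M) \<partial>M)"
    using measurable_from_sigma_vars[OF K(1) ind]
    by (simp add: nn_integral_mult_indep[OF K ind h] nn_integral_multc)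
  also have "\<dots> = (\<integral>\<^sup>+\<omega>. (\<integral>\<^sup>+\<omega>'. h (Y \<omega>) \<omega>' \<partial>M) \<partial>M)"
    by (rule nn_integral_split_countable[OF YM, symmetric]) simp
  finally show ?thesis .
qed

lemma nn_integral_power_sum_indep_le:
  fixes \<phi> :: "'b \<Rightarrow> real" and mu :: "'i \<Rightarrow> real"
  assumes B: "1 \<le> B" and c: "0 \<le> c" "c \<le> B" and \<phi>: "\<And>v. 0 \<le> \<phi> v"
    and mean: "\<And>i. i \<in> I \<Longrightarrow> (\<integral>\<^sup>+\<omega>. ennreal (\<phi> (X i \<omega>)) \<partial>M) = ennreal (mu i)"
    and mu: "\<And>i. i \<in> I \<Longrightarrow> 0 \<le> mu i \<and> mu i \<le> B"
    and mom: "\<And>i q. i \<in> I \<Longrightarrow> 2 \<le> q \<Longrightarrow> q \<le> l \<Longrightarrow> (\<integral>\<^sup>+\<omega>. ennreal (\<phi> (X i \<omega>) ^ q) \<partial>M) \<le> ennreal B"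
    and J: "finite J" "J \<subseteq> I" and p: "p \<le> l"
  shows "(\<integral>\<^sup>+\<omega>. ennreal ((c + (\<Sum>i\<in>J. \<phi> (X i \<omega>))) ^ p) \<partial>M)
           \<le> ennreal ((c + (\<Sum>i\<in>J. mu i)) ^ p + moment_excess B p * (1 + c + real (card J)) ^ (p - 1))"
  using J p
proof (induction J arbitrary: p rule: finite_induct)
  case empty
  then show ?case
    using moment_excess_nonneg[of B p] B c by (simp add: emeasure_space_1 ennreal_leI)
next
  case (insert i J)
  have iI: "i \<in> I" and JI: "J \<subseteq> I" using insert by auto
  define m where "m = c + (\<Sum>j\<in>J. mu j)"
  define N where "N = 1 + c + real (card J)"
  define a :: "nat \<Rightarrow> real" where "a q = m ^ q + moment_excess B q * N ^ (q - 1)" for q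
  define b :: "nat \<Rightarrow> real" where "b q = (if q = 0 then 1 else if q = 1 then mu i else B)" for q
  have m0: "0 \<le> m" unfolding m_def using c mu JI by (auto intro!: sum_nonneg add_nonneg_nonneg)
  have N1: "1 \<le> N" unfolding N_def using c by simp
  have "(\<Sum>j\<in>J. mu j) \<le> B * real (card J)"
    using sum_mono[of J mu "\<lambda>_. B"] mu JI by (auto simp: mult.commute)
  then have mB: "m \<le> B * N"
    unfolding m_def N_def using B c mult_right_mono[of 1 B c] by (simp add: algebra_simps)
  have "(\<integral>\<^sup>+\<omega>. ennreal ((c + (\<Sum>j\<in>insert i J. \<phi> (X j \<omega>))) ^ p) \<partial>M)
      = (\<integral>\<^sup>+\<omega>. ennreal (((c + (\<Sum>j\<in>J. \<phi> (X j \<omega>))) + \<phi> (X i \<omega>)) ^ p) \<partial>M)"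
    using insert by (simp add: add_ac)
  also have "\<dots> \<le> ennreal (\<Sum>j\<le>p. real (p choose j) * a (p - j) * b j)"
  proof (rule nn_integral_power_add_indep_le[of J "{i}"])
    show "J \<subseteq> I" "{i} \<subseteq> I" "J \<inter> {i} = {}" using insert by auto
    show "(\<lambda>\<omega>. c + (\<Sum>j\<in>J. \<phi> (X j \<omega>))) \<in> borel_measurable (sigma_vars J)"
      by (intro borel_measurable_add borel_measurable_const borel_measurable_sum
            measurable_compose[OF measurable_sigma_vars borel_measurable_count_space])
    show "(\<lambda>\<omega>. \<phi> (X i \<omega>)) \<in> borel_measurable (sigma_vars {i})"
      by (intro measurable_compose[OF measurable_sigma_vars borel_measurable_count_space]) simp
    show "0 \<le> c + (\<Sum>j\<in>J. \<phi> (X j \<omega>))" "0 \<le> \<phi> (X i \<omega>)" for \<omega>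
      using c \<phi> by (simp_all add: sum_nonneg)
    show "(\<integral>\<^sup>+\<omega>. ennreal ((c + (\<Sum>j\<in>J. \<phi> (X j \<omega>))) ^ q) \<partial>M) \<le> ennreal (a q)" if "q \<le> p" for q
      using insert.IH[of q] that insert.prems unfolding a_def m_def N_def by auto
    show "(\<integral>\<^sup>+\<omega>. ennreal (\<phi> (X i \<omega>) ^ q) \<partial>M) \<le> ennreal (b q)" if "q \<le> p" for q
    proof -
      consider "q = 0" | "q = 1" | "2 \<le> q" by linarith
      then show ?thesis
        by cases (use mean[OF iI] mom[OF iI] that insert.prems in \<open>auto simp: b_def emeasure_space_1\<close>)
    qed
    show "0 \<le> a q" "0 \<le> b q" for q
      unfolding a_def b_def using m0 N1 moment_excess_nonneg[of B q] B mu[OF iI] by auto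
  qed
  also have "\<dots> \<le> ennreal ((m + mu i) ^ p + moment_excess B p * (N + 1) ^ (p - 1))"
    unfolding a_def b_def using mu[OF iI]
    by (intro ennreal_leI moment_excess_step B m0 mB N1) auto
  also have "\<dots> = ennreal ((c + (\<Sum>j\<in>insert i J. mu j)) ^ p
                          + moment_excess B p * (1 + c + real (card (insert i J))) ^ (p - 1))"
    using insert by (simp add: m_def N_def algebra_simps)
  finally show ?case .
qed

end

section \<open>The total population\<close>

definition znorm1 :: "nat \<times> nat \<Rightarrow> real" where
  "znorm1 v = real (fst v + snd v)"

lemma znorm1_nonneg [simp]: "0 \<le> znorm1 v"
  by (simp add: znorm1_def)

lemma znorm_nonneg [simp]: "0 \<le> znorm v"
  by (simp add: znorm_def)

lemma znorm_le_znorm1: "znorm v \<le> znorm1 v"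
  unfolding znorm_def znorm1_def using norm_Pair_le[of "real (fst v)" "real (snd v)"] by simp

lemma znorm1_le_znorm: "znorm1 v \<le> 2 * znorm v"
proof -
  have "real (fst v) \<le> znorm v" "real (snd v) \<le> znorm v"
    unfolding znorm_def norm_Pair by auto
  then show ?thesis by (simp add: znorm1_def)
qed

context prob_space begin

lemma nn_integral_znorm1_power_finite:
  assumes Y: "Y \<in> measurable M (count_space UNIV)" and I: "integrable M (\<lambda>\<omega>. znorm (Y \<omega>) ^ l)"
  shows "(\<integral>\<^sup>+\<omega>. ennreal (znorm1 (Y \<omega>) ^ l) \<partial>M) < \<infinity>"
proof -
  have "(\<integral>\<^sup>+\<omega>. ennreal (znorm1 (Y \<omega>) ^ l) \<partial>M) \<le> (\<integral>\<^sup>+\<omega>. ennreal (2 ^ l * znorm (Y \<omega>) ^ l) \<partial>M)"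
    using power_mono[OF znorm1_le_znorm znorm1_nonneg, of _ l]
    by (intro nn_integral_mono ennreal_leI) (simp add: power_mult_distrib)
  also have "\<dots> = ennreal (\<integral>\<omega>. 2 ^ l * znorm (Y \<omega>) ^ l \<partial>M)"
    using I by (intro nn_integral_eq_integral) auto
  finally show ?thesis by (simp add: le_less_trans)
qed

lemma nn_integral_znorm1_eq_integral:
  assumes Y: "Y \<in> measurable M (count_space UNIV)"
    and I: "integrable M (\<lambda>\<omega>. znorm (Y \<omega>) ^ l)" and l: "1 \<le> l"
  shows "(\<integral>\<^sup>+\<omega>. ennreal (znorm1 (Y \<omega>)) \<partial>M)
           = ennreal ((\<integral>\<omega>. real (fst (Y \<omega>)) \<partial>M) + (\<integral>\<omega>. real (snd (Y \<omega>)) \<partial>M))"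
proof -
  have YM: "(\<lambda>\<omega>. g (Y \<omega>)) \<in> borel_measurable M" for g :: "nat \<times> nat \<Rightarrow> real"
    by (rule measurable_compose[OF Y]) simp
  have "(\<integral>\<^sup>+\<omega>. ennreal (znorm1 (Y \<omega>) ^ 1) \<partial>M) \<le> 1 + (\<integral>\<^sup>+\<omega>. ennreal (znorm1 (Y \<omega>) ^ l) \<partial>M)"
    using l by (intro nn_integral_power_le_one_plus YM) auto
  then have fin: "(\<integral>\<^sup>+\<omega>. ennreal (znorm1 (Y \<omega>)) \<partial>M) < \<infinity>"
    using nn_integral_znorm1_power_finite[OF Y I] by (simp add: le_less_trans)
  have "integrable M (\<lambda>\<omega>. real (g (Y \<omega>)))" if "\<And>v. g v \<le> fst v + snd v" for g
  proof (rule integrableI_nonneg)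
    have "(\<integral>\<^sup>+\<omega>. ennreal (real (g (Y \<omega>))) \<partial>M) \<le> (\<integral>\<^sup>+\<omega>. ennreal (znorm1 (Y \<omega>)) \<partial>M)"
      using that by (intro nn_integral_mono ennreal_leI) (auto simp: znorm1_def simp flip: of_nat_add)
    then show "(\<integral>\<^sup>+\<omega>. ennreal (real (g (Y \<omega>))) \<partial>M) < \<infinity>" using fin by (simp add: le_less_trans)
  qed (auto intro!: measurable_compose[OF Y])
  from this[of fst] this[of snd]
  have "integrable M (\<lambda>\<omega>. real (fst (Y \<omega>)))" "integrable M (\<lambda>\<omega>. real (snd (Y \<omega>)))" by simp_all
  then have "(\<integral>\<^sup>+\<omega>. ennreal (znorm1 (Y \<omega>)) \<partial>M) = ennreal (\<integral>\<omega>. real (fst (Y \<omega>)) + real (snd (Y \<omega>)) \<partial>M)"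
    unfolding znorm1_def of_nat_add by (intro nn_integral_eq_integral) auto
  with \<open>integrable M (\<lambda>\<omega>. real (fst (Y \<omega>)))\<close> \<open>integrable M (\<lambda>\<omega>. real (snd (Y \<omega>)))\<close> show ?thesis
    by (simp del: ennreal_plus)
qed

end

lemma gwi_family_Inl [simp]: "gwi_family xi eps (Inl (k, j, i)) = xi k j i"
  and gwi_family_Inr [simp]: "gwi_family xi eps (Inr k) = eps k"
  by (simp_all add: gwi_family_def)

lemma Inl_in_gwi_index_iff [simp]: "Inl (k, j, i) \<in> gwi_index \<longleftrightarrow> 1 \<le> k \<and> 1 \<le> j \<and> (i = 1 \<or> i = 2)"
  and Inr_in_gwi_index_iff [simp]: "Inr k \<in> gwi_index \<longleftrightarrow> 1 \<le> k"
  by (auto simp: gwi_index_def)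

definition gwi_generation :: "(nat \<times> nat \<times> nat) + nat \<Rightarrow> nat" where
  "gwi_generation x = (case x of Inl (k, _, _) \<Rightarrow> k | Inr k \<Rightarrow> k)"

lemma gwi_generation_simps [simp]:
  "gwi_generation (Inl (k, j, i)) = k" "gwi_generation (Inr k) = k"
  by (simp_all add: gwi_generation_def)

definition gwi_step :: "(nat \<Rightarrow> nat \<Rightarrow> nat \<Rightarrow> 'a \<Rightarrow> nat \<times> nat) \<Rightarrow> (nat \<Rightarrow> 'a \<Rightarrow> nat \<times> nat)
    \<Rightarrow> nat \<Rightarrow> nat \<times> nat \<Rightarrow> 'a \<Rightarrow> nat \<times> nat" where
  "gwi_step xi eps k n \<omega> =
     ((\<Sum>j\<in>{1..fst n}. fst (xi k j 1 \<omega>)) + (\<Sum>j\<in>{1..snd n}. fst (xi k j 2 \<omega>)) + fst (eps k \<omega>),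
      (\<Sum>j\<in>{1..fst n}. snd (xi k j 1 \<omega>)) + (\<Sum>j\<in>{1..snd n}. snd (xi k j 2 \<omega>)) + snd (eps k \<omega>))"

lemma gwi_Suc_step: "gwi xi eps (Suc k) \<omega> = gwi_step xi eps (Suc k) (gwi xi eps k \<omega>) \<omega>"
  by (simp add: gwi_step_def)

definition gwi_step_index :: "nat \<Rightarrow> nat \<times> nat \<Rightarrow> ((nat \<times> nat \<times> nat) + nat) set" where
  "gwi_step_index k n = (\<lambda>j. Inl (k, j, 1)) ` {1..fst n} \<union> (\<lambda>j. Inl (k, j, 2)) ` {1..snd n} \<union> {Inr k}"

lemma finite_gwi_step_index [simp]: "finite (gwi_step_index k n)"
  by (simp add: gwi_step_index_def)

lemma sum_gwi_step_index:
  "(\<Sum>x\<in>gwi_step_index k n. f x)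
     = (\<Sum>j\<in>{1..fst n}. f (Inl (k, j, 1))) + (\<Sum>j\<in>{1..snd n}. f (Inl (k, j, 2))) + f (Inr k)"
proof -
  have "(\<Sum>x\<in>gwi_step_index k n. f x)
      = (\<Sum>x\<in>(\<lambda>j. Inl (k, j, 1)) ` {1..fst n}. f x) + (\<Sum>x\<in>(\<lambda>j. Inl (k, j, 2)) ` {1..snd n}. f x) + f (Inr k)"
    unfolding gwi_step_index_def by (subst sum.union_disjoint, auto)+
  then show ?thesis by (simp add: sum.reindex inj_on_def)
qed

lemma card_gwi_step_index: "card (gwi_step_index k n) = fst n + snd n + 1"
  using sum_gwi_step_index[of "\<lambda>_. 1::nat" k n] by simp

lemma znorm1_gwi_step:
  "znorm1 (gwi_step xi eps k n \<omega>) = (\<Sum>x\<in>gwi_step_index k n. znorm1 (gwi_family xi eps x \<omega>))"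
  unfolding sum_gwi_step_index by (simp add: gwi_step_def znorm1_def sum.distrib)

locale gwi_indep = indep_family M "gwi_family xi eps" gwi_index
  for M :: "'a measure"
    and xi :: "nat \<Rightarrow> nat \<Rightarrow> nat \<Rightarrow> 'a \<Rightarrow> nat \<times> nat"
    and eps :: "nat \<Rightarrow> 'a \<Rightarrow> nat \<times> nat"
begin

definition gwi_upto :: "nat \<Rightarrow> ((nat \<times> nat \<times> nat) + nat) set" where
  "gwi_upto k = {x \<in> gwi_index. gwi_generation x \<le> k}"

definition gwi_at :: "nat \<Rightarrow> ((nat \<times> nat \<times> nat) + nat) set" where
  "gwi_at k = {x \<in> gwi_index. gwi_generation x = k}"

lemma gwi_step_index_subset: "1 \<le> k \<Longrightarrow> gwi_step_index k n \<subseteq> gwi_at k"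
  by (auto simp: gwi_step_index_def gwi_at_def)

lemma measurable_gwi_step:
  assumes "1 \<le> k"
  shows "gwi_step xi eps k n \<in> measurable (sigma_vars (gwi_step_index k n)) (count_space UNIV)"
proof -
  let ?N = "sigma_vars (gwi_step_index k n)"
  have var: "(\<lambda>\<omega>. g (gwi_family xi eps x \<omega>)) \<in> measurable ?N (count_space UNIV)"
    if "x \<in> gwi_step_index k n" for x and g :: "nat \<times> nat \<Rightarrow> nat"
    by (rule measurable_compose[OF measurable_sigma_vars[OF that]]) simp
  have "(\<lambda>\<omega>. \<Sum>j\<in>{1..(if i = 1 then fst n else snd n)}. g (xi k j i \<omega>)) \<in> measurable ?N (count_space UNIV)"
    if "i = 1 \<or> i = 2" for i and g :: "nat \<times> nat \<Rightarrow> nat"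
    using var[of "Inl (k, _, i)" g] that by (intro measurable_count_space_sum) (auto simp: gwi_step_index_def)
  from this[of 1] this[of 2]
  have "(\<lambda>\<omega>. (\<Sum>j\<in>{1..fst n}. g (xi k j 1 \<omega>)) + (\<Sum>j\<in>{1..snd n}. g (xi k j 2 \<omega>)) + g (eps k \<omega>))
          \<in> measurable ?N (count_space UNIV)" for g :: "nat \<times> nat \<Rightarrow> nat"
    using var[of "Inr k" g]
    by (intro measurable_count_space_apply2[where F = "(+)"]) (simp_all add: gwi_step_index_def)
  from this[of fst] this[of snd] show ?thesis
    unfolding gwi_step_def by (rule measurable_count_space_apply2[where F = Pair])
qed

lemma measurable_gwi_upto: "gwi xi eps k \<in> measurable (sigma_vars (gwi_upto k)) (count_space UNIV)"
proof (induction k)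
  case (Suc k)
  have "gwi xi eps k \<in> measurable (sigma_vars (gwi_upto (Suc k))) (count_space UNIV)"
    by (rule measurable_sigma_vars_mono[OF _ Suc]) (auto simp: gwi_upto_def)
  moreover have "gwi_step xi eps (Suc k) n \<in> measurable (sigma_vars (gwi_upto (Suc k))) (count_space UNIV)"
    for n
    using gwi_step_index_subset[of "Suc k" n]
    by (intro measurable_sigma_vars_mono[OF _ measurable_gwi_step]) (auto simp: gwi_upto_def gwi_at_def)
  ultimately show ?case
    unfolding gwi_Suc_step by (rule measurable_compose_countable[rotated])
qed simp

lemma measurable_gwi: "gwi xi eps k \<in> measurable M (count_space UNIV)"
  by (rule measurable_from_sigma_vars[OF _ measurable_gwi_upto]) (auto simp: gwi_upto_def)

lemma nn_integral_gwi_freeze: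
  assumes "\<And>n. h n \<in> borel_measurable (sigma_vars (gwi_at (Suc k)))"
  shows "(\<integral>\<^sup>+\<omega>. h (gwi xi eps k \<omega>) \<omega> \<partial>M) = (\<integral>\<^sup>+\<omega>. (\<integral>\<^sup>+\<omega>'. h (gwi xi eps k \<omega>) \<omega>' \<partial>M) \<partial>M)"
  by (rule nn_integral_indep_freeze[OF _ _ _ measurable_gwi_upto assms])
     (auto simp: gwi_upto_def gwi_at_def)

end

section \<open>Moments of the total population\<close>

locale gwi_critical = gwi_indep M xi eps
  for M :: "'a measure" and xi eps +
  fixes l :: nat
  assumes l: "1 \<le> l"
    and offspring_distr: "\<And>k j i. 1 \<le> k \<Longrightarrow> 1 \<le> j \<Longrightarrow> i = 1 \<or> i = 2 \<Longrightarrow>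
           distr M (count_space UNIV) (xi k j i) = distr M (count_space UNIV) (xi 1 1 i)"
    and immigration_distr: "\<And>k. 1 \<le> k \<Longrightarrow>
           distr M (count_space UNIV) (eps k) = distr M (count_space UNIV) (eps 1)"
    and offspring_mean: "\<And>i. i = 1 \<or> i = 2 \<Longrightarrow> (\<integral>\<^sup>+\<omega>. ennreal (znorm1 (xi 1 1 i \<omega>)) \<partial>M) = 1"
    and offspring_moment: "\<And>i. i = 1 \<or> i = 2 \<Longrightarrow> (\<integral>\<^sup>+\<omega>. ennreal (znorm1 (xi 1 1 i \<omega>) ^ l) \<partial>M) < \<infinity>"
    and immigration_moment: "(\<integral>\<^sup>+\<omega>. ennreal (znorm1 (eps 1 \<omega>) ^ l) \<partial>M) < \<infinity>"
begin

lemma measurable_offspring: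
  "1 \<le> k \<Longrightarrow> 1 \<le> j \<Longrightarrow> i = 1 \<or> i = 2 \<Longrightarrow> xi k j i \<in> measurable M (count_space UNIV)"
  using measurable_var[of "Inl (k, j, i)"] by simp

lemma measurable_immigration: "1 \<le> k \<Longrightarrow> eps k \<in> measurable M (count_space UNIV)"
  using measurable_var[of "Inr k"] by simp

lemma nn_integral_offspring:
  assumes "1 \<le> k" "1 \<le> j" "i = 1 \<or> i = 2"
  shows "(\<integral>\<^sup>+\<omega>. g (xi k j i \<omega>) \<partial>M) = (\<integral>\<^sup>+\<omega>. g (xi 1 1 i \<omega>) \<partial>M)"
  using assms by (intro nn_integral_cong_distr offspring_distr measurable_offspring) auto

lemma nn_integral_immigration:
  assumes "1 \<le> k"
  shows "(\<integral>\<^sup>+\<omega>. g (eps k \<omega>) \<partial>M) = (\<integral>\<^sup>+\<omega>. g (eps 1 \<omega>) \<partial>M)"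
  using assms by (intro nn_integral_cong_distr immigration_distr measurable_immigration) auto

definition immigration_mean :: real where
  "immigration_mean = enn2real (\<integral>\<^sup>+\<omega>. ennreal (znorm1 (eps 1 \<omega>)) \<partial>M)"

definition moment_bound :: real where
  "moment_bound = 1 + immigration_mean + enn2real (\<integral>\<^sup>+\<omega>. ennreal (znorm1 (xi 1 1 1 \<omega>) ^ l) \<partial>M)
     + enn2real (\<integral>\<^sup>+\<omega>. ennreal (znorm1 (xi 1 1 2 \<omega>) ^ l) \<partial>M)
     + enn2real (\<integral>\<^sup>+\<omega>. ennreal (znorm1 (eps 1 \<omega>) ^ l) \<partial>M)"

lemma immigration_mean_nonneg: "0 \<le> immigration_mean"
  by (simp add: immigration_mean_def)

lemma moment_bound_ge: "1 \<le> moment_bound" "immigration_mean \<le> moment_bound"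
  using immigration_mean_nonneg by (simp_all add: moment_bound_def)

lemma nn_integral_znorm1_power_le_moment_bound:
  assumes Y: "Y \<in> {xi 1 1 1, xi 1 1 2, eps 1}" and q: "q \<le> l"
  shows "(\<integral>\<^sup>+\<omega>. ennreal (znorm1 (Y \<omega>) ^ q) \<partial>M) \<le> ennreal moment_bound"
proof -
  let ?m = "\<integral>\<^sup>+\<omega>. ennreal (znorm1 (Y \<omega>) ^ l) \<partial>M"
  have YM: "Y \<in> measurable M (count_space UNIV)"
    using Y by (auto intro: measurable_offspring measurable_immigration)
  have "?m < \<infinity>" using Y offspring_moment immigration_moment by auto
  have "(\<integral>\<^sup>+\<omega>. ennreal (znorm1 (Y \<omega>) ^ q) \<partial>M) \<le> 1 + ?m"
    using q by (intro nn_integral_power_le_one_plus measurable_compose[OF YM]) auto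
  also have "\<dots> = ennreal (1 + enn2real ?m)"
    using \<open>?m < \<infinity>\<close> by simp
  also have "\<dots> \<le> ennreal moment_bound"
    using Y immigration_mean_nonneg by (intro ennreal_leI) (auto simp: moment_bound_def)
  finally show ?thesis .
qed

lemma immigration_mean_finite: "(\<integral>\<^sup>+\<omega>. ennreal (znorm1 (eps 1 \<omega>)) \<partial>M) < \<infinity>"
  using nn_integral_znorm1_power_le_moment_bound[of "eps 1" 1] l by (simp add: le_less_trans)

lemma mean_gwi_family:
  assumes "x \<in> gwi_index"
  shows "(\<integral>\<^sup>+\<omega>. ennreal (znorm1 (gwi_family xi eps x \<omega>)) \<partial>M)
           = ennreal (case x of Inl _ \<Rightarrow> 1 | Inr _ \<Rightarrow> immigration_mean)"
proof (cases x)
  case (Inl t)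
  with assms obtain k j i where "x = Inl (k, j, i)" "1 \<le> k" "1 \<le> j" "i = 1 \<or> i = 2"
    by (cases t) auto
  then show ?thesis using nn_integral_offspring[of k j i "\<lambda>v. ennreal (znorm1 v)"] offspring_mean[of i]
    by simp
next
  case (Inr k)
  then show ?thesis
    using assms nn_integral_immigration[of k "\<lambda>v. ennreal (znorm1 v)"] immigration_mean_finite
    by (simp add: immigration_mean_def)
qed

lemma moment_gwi_family:
  assumes "x \<in> gwi_index" "q \<le> l"
  shows "(\<integral>\<^sup>+\<omega>. ennreal (znorm1 (gwi_family xi eps x \<omega>) ^ q) \<partial>M) \<le> ennreal moment_bound"
proof (cases x)
  case (Inl t)
  with assms obtain k j i where "x = Inl (k, j, i)" "1 \<le> k" "1 \<le> j" "i = 1 \<or> i = 2"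
    by (cases t) auto
  then show ?thesis
    using nn_integral_offspring[of k j i "\<lambda>v. ennreal (znorm1 v ^ q)"]
      nn_integral_znorm1_power_le_moment_bound[of "xi 1 1 i" q] assms
    by auto
next
  case (Inr k)
  then show ?thesis
    using assms nn_integral_immigration[of k "\<lambda>v. ennreal (znorm1 v ^ q)"]
      nn_integral_znorm1_power_le_moment_bound[of "eps 1" q]
    by simp
qed

definition growth_const :: "nat \<Rightarrow> real" where
  "growth_const p = (2 + immigration_mean) ^ p + moment_excess moment_bound p * 3 ^ (p - 1)"

lemma growth_const_nonneg: "0 \<le> growth_const p"
  unfolding growth_const_def
  using immigration_mean_nonneg moment_bound_ge by (simp add: moment_excess_nonneg)

lemma nn_integral_gwi_step_le:
  fixes n :: "nat \<times> nat"
  assumes p: "p \<le> l"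
  defines "x \<equiv> 1 + znorm1 n"
  shows "(\<integral>\<^sup>+\<omega>. ennreal ((1 + znorm1 (gwi_step xi eps (Suc k) n \<omega>)) ^ p) \<partial>M)
           \<le> ennreal (x ^ p + growth_const p * x ^ (p - 1))"
proof -
  let ?\<mu> = immigration_mean and ?B = moment_bound and ?J = "gwi_step_index (Suc k) n"
  let ?mu = "\<lambda>y :: (nat \<times> nat \<times> nat) + nat. case y of Inl _ \<Rightarrow> 1 | Inr _ \<Rightarrow> ?\<mu>"
  have x1: "1 \<le> x" unfolding x_def by simp
  have "(\<integral>\<^sup>+\<omega>. ennreal ((1 + znorm1 (gwi_step xi eps (Suc k) n \<omega>)) ^ p) \<partial>M)
      \<le> ennreal ((1 + (\<Sum>y\<in>?J. ?mu y)) ^ p + moment_excess ?B p * (1 + 1 + real (card ?J)) ^ (p - 1))"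
    unfolding znorm1_gwi_step
  proof (rule nn_integral_power_sum_indep_le[OF _ _ _ _ mean_gwi_family _ moment_gwi_family _ _ p])
    show "?J \<subseteq> gwi_index" using gwi_step_index_subset[of "Suc k" n] by (auto simp: gwi_at_def)
    show "0 \<le> ?mu y \<and> ?mu y \<le> ?B" for y
      using moment_bound_ge immigration_mean_nonneg by (cases y) auto
  qed (use moment_bound_ge in auto)
  also have "\<dots> = ennreal ((x + ?\<mu>) ^ p + moment_excess ?B p * (x + 2) ^ (p - 1))"
    unfolding sum_gwi_step_index card_gwi_step_index x_def by (simp add: znorm1_def algebra_simps)
  also have "\<dots> \<le> ennreal (x ^ p + growth_const p * x ^ (p - 1))"
  proof (rule ennreal_leI)
    have "(x + 2) ^ (p - 1) \<le> (3 * x) ^ (p - 1)" using x1 by (intro power_mono) auto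
    then have "moment_excess ?B p * (x + 2) ^ (p - 1) \<le> moment_excess ?B p * 3 ^ (p - 1) * x ^ (p - 1)"
      using moment_bound_ge by (simp add: mult_left_mono moment_excess_nonneg power_mult_distrib mult.assoc)
    then show "(x + ?\<mu>) ^ p + moment_excess ?B p * (x + 2) ^ (p - 1) \<le> x ^ p + growth_const p * x ^ (p - 1)"
      using power_add_le_power_plus[OF x1 immigration_mean_nonneg, of p]
      unfolding growth_const_def by (simp add: algebra_simps)
  qed
  finally show ?thesis .
qed

definition shifted_total :: "nat \<Rightarrow> 'a \<Rightarrow> real" where
  "shifted_total k \<omega> = 1 + znorm1 (gwi xi eps k \<omega>)"

lemma shifted_total_ge_1: "1 \<le> shifted_total k \<omega>"
  by (simp add: shifted_total_def)

lemma shifted_total_0 [simp]: "shifted_total 0 \<omega> = 1"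
  by (simp add: shifted_total_def znorm1_def)

lemma borel_measurable_shifted_total: "shifted_total k \<in> borel_measurable M"
  unfolding shifted_total_def by (rule measurable_compose[OF measurable_gwi]) simp

lemma nn_integral_shifted_total_Suc_le:
  assumes "p \<le> l"
  shows "(\<integral>\<^sup>+\<omega>. ennreal (shifted_total (Suc k) \<omega> ^ p) \<partial>M)
           \<le> (\<integral>\<^sup>+\<omega>. ennreal (shifted_total k \<omega> ^ p) \<partial>M)
              + ennreal (growth_const p) * (\<integral>\<^sup>+\<omega>. ennreal (shifted_total k \<omega> ^ (p - 1)) \<partial>M)"
proof -
  define h where "h n \<omega> = ennreal ((1 + znorm1 (gwi_step xi eps (Suc k) n \<omega>)) ^ p)" for n \<omega>
  have "h n \<in> borel_measurable (sigma_vars (gwi_at (Suc k)))" for n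
    unfolding h_def using gwi_step_index_subset[of "Suc k" n]
    by (intro measurable_compose[OF measurable_sigma_vars_mono[OF _ measurable_gwi_step]]) auto
  then have "(\<integral>\<^sup>+\<omega>. ennreal (shifted_total (Suc k) \<omega> ^ p) \<partial>M) = (\<integral>\<^sup>+\<omega>. (\<integral>\<^sup>+\<omega>'. h (gwi xi eps k \<omega>) \<omega>' \<partial>M) \<partial>M)"
    unfolding shifted_total_def gwi_Suc_step h_def[symmetric] by (rule nn_integral_gwi_freeze)
  also have "\<dots> \<le> (\<integral>\<^sup>+\<omega>. ennreal (shifted_total k \<omega> ^ p)
                         + ennreal (growth_const p) * ennreal (shifted_total k \<omega> ^ (p - 1)) \<partial>M)"
    using nn_integral_gwi_step_le[OF assms] shifted_total_ge_1 growth_const_nonneg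
    by (intro nn_integral_mono) (simp add: h_def shifted_total_def ennreal_mult)
  also have "\<dots> = (\<integral>\<^sup>+\<omega>. ennreal (shifted_total k \<omega> ^ p) \<partial>M)
                   + ennreal (growth_const p) * (\<integral>\<^sup>+\<omega>. ennreal (shifted_total k \<omega> ^ (p - 1)) \<partial>M)"
    using borel_measurable_shifted_total[of k] by (simp add: nn_integral_add nn_integral_cmult)
  finally show ?thesis .
qed

lemma nn_integral_shifted_total_power_Suc_le:
  assumes p: "Suc p \<le> l" and C: "0 \<le> C"
    and bound: "\<And>k. (\<integral>\<^sup>+\<omega>. ennreal (shifted_total k \<omega> ^ p) \<partial>M) \<le> ennreal (C * (real k + 1) ^ p)"
  shows "(\<integral>\<^sup>+\<omega>. ennreal (shifted_total k \<omega> ^ Suc p) \<partial>M)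
           \<le> ennreal (1 + growth_const (Suc p) * C * real k * (real k + 1) ^ p)"
proof (induction k)
  case 0
  then show ?case by (simp add: emeasure_space_1)
next
  case (Suc k)
  let ?K = "growth_const (Suc p)"
  have K: "0 \<le> ?K" by (rule growth_const_nonneg)
  have "(\<integral>\<^sup>+\<omega>. ennreal (shifted_total (Suc k) \<omega> ^ Suc p) \<partial>M)
      \<le> (\<integral>\<^sup>+\<omega>. ennreal (shifted_total k \<omega> ^ Suc p) \<partial>M) + ennreal ?K * (\<integral>\<^sup>+\<omega>. ennreal (shifted_total k \<omega> ^ p) \<partial>M)"
    using nn_integral_shifted_total_Suc_le[OF p, of k] by simp
  also have "\<dots> \<le> ennreal (1 + ?K * C * real k * (real k + 1) ^ p) + ennreal ?K * ennreal (C * (real k + 1) ^ p)"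
    by (intro add_mono mult_left_mono Suc.IH bound) auto
  also have "\<dots> = ennreal (1 + ?K * C * real k * (real k + 1) ^ p + ?K * (C * (real k + 1) ^ p))"
    using K C by (simp add: ennreal_mult)
  also have "\<dots> \<le> ennreal (1 + ?K * C * real (Suc k) * (real (Suc k) + 1) ^ p)"
  proof (rule ennreal_leI)
    have "?K * C * (real k + 1) * (real k + 1) ^ p \<le> ?K * C * (real k + 1) * (real k + 2) ^ p"
      using K C by (intro mult_left_mono power_mono) auto
    then show "1 + ?K * C * real k * (real k + 1) ^ p + ?K * (C * (real k + 1) ^ p)
        \<le> 1 + ?K * C * real (Suc k) * (real (Suc k) + 1) ^ p"
      by (simp add: algebra_simps)
  qed
  finally show ?case .
qed

lemma nn_integral_shifted_total_power_le:
  assumes "p \<le> l"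
  shows "\<exists>C\<ge>0. \<forall>k. (\<integral>\<^sup>+\<omega>. ennreal (shifted_total k \<omega> ^ p) \<partial>M) \<le> ennreal (C * (real k + 1) ^ p)"
  using assms
proof (induction p)
  case 0
  show ?case by (intro exI[of _ 1]) (simp add: emeasure_space_1)
next
  case (Suc p)
  then obtain C where C: "0 \<le> C" "\<And>k. (\<integral>\<^sup>+\<omega>. ennreal (shifted_total k \<omega> ^ p) \<partial>M) \<le> ennreal (C * (real k + 1) ^ p)"
    by auto
  define C' where "C' = 1 + growth_const (Suc p) * C"
  have poly_le: "1 + growth_const (Suc p) * C * real k * (real k + 1) ^ p \<le> C' * (real k + 1) ^ Suc p" for k
  proof -
    have "growth_const (Suc p) * C * real k * (real k + 1) ^ p \<le> growth_const (Suc p) * C * (real k + 1) ^ Suc p"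
      using growth_const_nonneg C by (simp add: mult_left_mono mult_right_mono mult.assoc)
    then show ?thesis using one_le_power[of "real k + 1" "Suc p"] by (simp add: C'_def algebra_simps)
  qed
  show ?case
  proof (intro exI[of _ C'] conjI allI)
    show "0 \<le> C'" unfolding C'_def using growth_const_nonneg C by simp
    show "(\<integral>\<^sup>+\<omega>. ennreal (shifted_total k \<omega> ^ Suc p) \<partial>M) \<le> ennreal (C' * (real k + 1) ^ Suc p)" for k
      using nn_integral_shifted_total_power_Suc_le[OF Suc.prems C, of k] ennreal_leI[OF poly_le[of k]]
      by (rule order_trans)
  qed
qed

lemma gwi_scaled_moment_bounded:
  "(SUP k\<in>{1..}. \<integral>\<^sup>+\<omega>. ennreal (znorm (gwi xi eps k \<omega>) ^ l / real k ^ l) \<partial>M) < \<infinity>"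
proof -
  obtain C where C: "0 \<le> C" "\<And>k. (\<integral>\<^sup>+\<omega>. ennreal (shifted_total k \<omega> ^ l) \<partial>M) \<le> ennreal (C * (real k + 1) ^ l)"
    using nn_integral_shifted_total_power_le[of l] by auto
  have "(\<integral>\<^sup>+\<omega>. ennreal (znorm (gwi xi eps k \<omega>) ^ l / real k ^ l) \<partial>M) \<le> ennreal (C * 2 ^ l)"
    if k: "1 \<le> k" for k
  proof -
    have "(\<integral>\<^sup>+\<omega>. ennreal (znorm (gwi xi eps k \<omega>) ^ l / real k ^ l) \<partial>M)
        \<le> (\<integral>\<^sup>+\<omega>. ennreal (shifted_total k \<omega> ^ l) * ennreal (1 / real k ^ l) \<partial>M)"
    proof (rule nn_integral_mono)
      fix \<omega>
      have "znorm (gwi xi eps k \<omega>) ^ l \<le> shifted_total k \<omega> ^ l"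
        using znorm_le_znorm1[of "gwi xi eps k \<omega>"] by (intro power_mono) (auto simp: shifted_total_def)
      then show "ennreal (znorm (gwi xi eps k \<omega>) ^ l / real k ^ l)
                   \<le> ennreal (shifted_total k \<omega> ^ l) * ennreal (1 / real k ^ l)"
        using shifted_total_ge_1[of k \<omega>] by (simp add: ennreal_mult[symmetric] ennreal_leI divide_right_mono)
    qed
    also have "\<dots> = (\<integral>\<^sup>+\<omega>. ennreal (shifted_total k \<omega> ^ l) \<partial>M) * ennreal (1 / real k ^ l)"
      using borel_measurable_shifted_total[of k] by (simp add: nn_integral_multc)
    also have "\<dots> \<le> ennreal (C * (real k + 1) ^ l / real k ^ l)"
      using mult_right_mono[OF C(2)[of k], of "ennreal (1 / real k ^ l)"] C(1)
      by (simp add: ennreal_mult[symmetric])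
    also have "\<dots> \<le> ennreal (C * 2 ^ l)"
    proof (rule ennreal_leI)
      have "(real k + 1) ^ l \<le> 2 ^ l * real k ^ l"
        using k power_mono[of "real k + 1" "2 * real k" l] by (simp add: power_mult_distrib)
      then show "C * (real k + 1) ^ l / real k ^ l \<le> C * 2 ^ l"
        using C(1) k by (simp add: divide_le_eq mult_left_mono mult.assoc)
    qed
    finally show ?thesis .
  qed
  then have "(SUP k\<in>{1..}. \<integral>\<^sup>+\<omega>. ennreal (znorm (gwi xi eps k \<omega>) ^ l / real k ^ l) \<partial>M) \<le> ennreal (C * 2 ^ l)"
    by (intro SUP_least) auto
  then show ?thesis by (simp add: le_less_trans)
qed

end

theorem lemmaB6:
  fixes M :: "'a measure"
    and xi :: "nat \<Rightarrow> nat \<Rightarrow> nat \<Rightarrow> 'a \<Rightarrow> nat \<times> nat"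
    and eps :: "nat \<Rightarrow> 'a \<Rightarrow> nat \<times> nat"
    and \<alpha> \<beta> :: real and l :: nat
  assumes "prob_space M"
    and indep: "prob_space.indep_vars M (\<lambda>_. count_space UNIV) (gwi_family xi eps) gwi_index"
    and id1: "\<And>k j. 1 \<le> k \<Longrightarrow> 1 \<le> j \<Longrightarrow>
               distr M (count_space UNIV) (xi k j 1) = distr M (count_space UNIV) (xi 1 1 1)"
    and id2: "\<And>k j. 1 \<le> k \<Longrightarrow> 1 \<le> j \<Longrightarrow>
               distr M (count_space UNIV) (xi k j 2) = distr M (count_space UNIV) (xi 1 1 2)"
    and id3: "\<And>k. 1 \<le> k \<Longrightarrow>
               distr M (count_space UNIV) (eps k) = distr M (count_space UNIV) (eps 1)"
    and \<alpha>: "0 \<le> \<alpha>" "\<alpha> \<le> 1" and \<beta>: "0 \<le> \<beta>" "\<beta> \<le> 1" and sum1: "\<alpha> + \<beta> = 1"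
    and mean1: "(\<integral>\<omega>. real (fst (xi 1 1 1 \<omega>)) \<partial>M) = \<alpha>"
               "(\<integral>\<omega>. real (snd (xi 1 1 1 \<omega>)) \<partial>M) = \<beta>"
    and mean2: "(\<integral>\<omega>. real (fst (xi 1 1 2 \<omega>)) \<partial>M) = \<beta>"
               "(\<integral>\<omega>. real (snd (xi 1 1 2 \<omega>)) \<partial>M) = \<alpha>"
    and l: "1 \<le> l"
    and mom1: "integrable M (\<lambda>\<omega>. znorm (xi 1 1 1 \<omega>) ^ l)"
    and mom2: "integrable M (\<lambda>\<omega>. znorm (xi 1 1 2 \<omega>) ^ l)"
    and mom3: "integrable M (\<lambda>\<omega>. znorm (eps 1 \<omega>) ^ l)"
  shows "(SUP k\<in>{1..}. (\<integral>\<^sup>+ \<omega>. ennreal (znorm (gwi xi eps k \<omega>) ^ l / real k ^ l) \<partial>M)) < \<infinity>"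
proof -
  interpret prob_space M by fact
  interpret gwi_indep M xi eps by unfold_locales (fact indep)
  have xi1: "xi 1 1 1 \<in> measurable M (count_space UNIV)" "xi 1 1 2 \<in> measurable M (count_space UNIV)"
    using measurable_var[of "Inl (1, 1, 1)"] measurable_var[of "Inl (1, 1, 2)"] by simp_all
  have eps1: "eps 1 \<in> measurable M (count_space UNIV)"
    using measurable_var[of "Inr 1"] by simp
  interpret gwi_critical M xi eps l
  proof unfold_locales
    show "1 \<le> l" by (fact l)
    show "distr M (count_space UNIV) (xi k j i) = distr M (count_space UNIV) (xi 1 1 i)"
      if "1 \<le> k" "1 \<le> j" "i = 1 \<or> i = 2" for k j i
      using that id1 id2 by auto
    show "distr M (count_space UNIV) (eps k) = distr M (count_space UNIV) (eps 1)" if "1 \<le> k" for k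
      using that by (rule id3)
    show "(\<integral>\<^sup>+\<omega>. ennreal (znorm1 (xi 1 1 i \<omega>)) \<partial>M) = 1" if "i = 1 \<or> i = 2" for i
      using that nn_integral_znorm1_eq_integral[OF xi1(1) mom1 l] nn_integral_znorm1_eq_integral[OF xi1(2) mom2 l]
        mean1 mean2 sum1
      by (auto simp: add.commute simp del: ennreal_plus)
    show "(\<integral>\<^sup>+\<omega>. ennreal (znorm1 (xi 1 1 i \<omega>) ^ l) \<partial>M) < \<infinity>" if "i = 1 \<or> i = 2" for i
      using that nn_integral_znorm1_power_finite[OF xi1(1) mom1] nn_integral_znorm1_power_finite[OF xi1(2) mom2]
      by auto
    show "(\<integral>\<^sup>+\<omega>. ennreal (znorm1 (eps 1 \<omega>) ^ l) \<partial>M) < \<infinity>"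
      by (rule nn_integral_znorm1_power_finite[OF eps1 mom3])
  qed
  show ?thesis by (rule gwi_scaled_moment_bounded)
qed

end
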